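(* Let $K=\mathbb{Q}(\rho)$, where $\rho$ is a root of $x^3-ax^2-(a+3)x-1$ with $a\equiv3$ or $21\pmod{27}$, $a>12$ and $\frac{\Delta}{27}$ square-free, where $\Delta=a^2+3a+9$. Put $g_2=\rho$, $g_3=\frac{1+\rho+\rho^2}{3}$. \begin{enumerate} \item If $\alpha=-r\rho+\rho^2$ with $1\leq r\leq\frac{a}{3}$, then $N(\alpha)\leq\frac{2a^3+9a^2+27a+27}{27}=\frac{(2a+3)\Delta}{27}$. \item If $\alpha=-(r+1)g_2+g_3$ with $0\leq r\leq\frac{a}{3}-1$, then $N(\alpha)<\frac{(2a+3)\Delta}{27}$. \end{enumerate}
   Context: $N$ denotes the norm from $K$ to $\mathbb{Q}$. *)

theory Defs
  imports "HOL-Computational_Algebra.Computational_Algebra"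
begin

definition cubic :: "int \<Rightarrow> complex poly" where
  "cubic a = [:-1, - of_int (a + 3), - of_int a, 1:]"

text \<open>Norm from K = Q(rho) to Q of the element p(rho), p a rational polynomial:
  the product of its images under the embeddings of K into C, i.e. of p(z)
  over the (three distinct) complex roots z of the defining cubic.\<close>
definition normK :: "int \<Rightarrow> rat poly \<Rightarrow> complex" where
  "normK a p = (\<Prod>z\<in>{z. poly (cubic a) z = 0}. poly (map_poly of_rat p) z)"

end

theory Submission
  imports Defs
begin

text \<open>The norm of \<open>p(\<rho>)\<close> is the product of \<open>p\<close> over the three roots of the cubic, which are
  distinct because its discriminant is \<open>\<Delta>\<^sup>2\<close>. For \<open>p = x\<^sup>2 - P x + Q\<close> this product is a
  symmetric function of the roots, hence an integer polynomial in \<open>a\<close>, \<open>P\<close> and \<open>Q\<close>. Since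
  \<open>3 g\<^sub>3 - 3 (r + 1) g\<^sub>2 = \<rho>\<^sup>2 - (3r + 2) \<rho> + 1\<close>, both estimates become elementary
  inequalities between integers; the first one is the factorisation
  \<open>(2a + 3) \<Delta> - 27 N(\<rho>\<^sup>2 - r \<rho>) = (a - 3r)(2a\<^sup>2 + 6ar - 9r\<^sup>2 + 9a + 27)\<close>.\<close>

lemma linear_factors_product3:
  fixes z1 z2 z3 :: "'a::comm_ring_1"
  shows "[:-z1, 1:] * [:-z2, 1:] * [:-z3, 1:]
           = [:-(z1*z2*z3), z1*z2 + z1*z3 + z2*z3, -(z1 + z2 + z3), 1:]"
  by (simp add: algebra_simps)

lemma cubic_eq_linear_factors:
  obtains z1 z2 z3 :: complex where "cubic a = [:-z1, 1:] * [:-z2, 1:] * [:-z3, 1:]"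
proof -
  obtain root where "smult (lead_coeff (cubic a)) (\<Prod>i<degree (cubic a). [:-root i, 1:]) = cubic a"
    using complex_poly_decompose' by blast
  moreover have "degree (cubic a) = 3" "lead_coeff (cubic a) = 1"
    by (simp_all add: cubic_def)
  ultimately have "cubic a = [:-root 0, 1:] * [:-root 1, 1:] * [:-root 2, 1:]"
    by (simp add: numeral_3_eq_3 numeral_2_eq_2 lessThan_Suc mult_ac)
  then show thesis by (rule that)
qed

lemma discriminant_cubic:
  fixes z1 z2 z3 :: "'a::comm_ring_1"
  defines "s1 \<equiv> z1 + z2 + z3" and "s2 \<equiv> z1*z2 + z1*z3 + z2*z3" and "s3 \<equiv> z1*z2*z3"
  shows "((z1 - z2)*(z1 - z3)*(z2 - z3))^2
           = s1^2*s2^2 - 4*s2^3 - 4*s1^3*s3 - 27*s3^2 + 18*s1*s2*s3"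
  unfolding s1_def s2_def s3_def by (simp add: algebra_simps power2_eq_square power3_eq_cube)

text \<open>The right-hand side is the resultant \<open>f(u) f(v)\<close> of \<open>f = x\<^sup>3 - s\<^sub>1 x\<^sup>2 + s\<^sub>2 x - s\<^sub>3\<close>
  and \<open>(x - u)(x - v) = x\<^sup>2 - p x + q\<close>, expanded in \<open>p\<close> and \<open>q\<close>.\<close>

lemma prod_quadratic_at_roots:
  fixes z1 z2 z3 p q :: "'a::comm_ring_1"
  defines "s1 \<equiv> z1 + z2 + z3" and "s2 \<equiv> z1*z2 + z1*z3 + z2*z3" and "s3 \<equiv> z1*z2*z3"
  shows "(z1^2 - p*z1 + q) * (z2^2 - p*z2 + q) * (z3^2 - p*z3 + q)
           = q^3 - s1*q^2*p + s2*q*(p^2 - 2*q) - s3*(p^3 - 3*p*q) + s1^2*q^2 - s1*s2*q*p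
             + s1*s3*(p^2 - 2*q) + s2^2*q - s2*s3*p + s3^2"
  unfolding s1_def s2_def s3_def by (simp add: algebra_simps power2_eq_square power3_eq_cube)

lemma simplest_cubic_roots:
  obtains z1 z2 z3 :: complex where
    "z1 + z2 + z3 = of_int a" "z1*z2 + z1*z3 + z2*z3 = - of_int (a + 3)" "z1*z2*z3 = 1"
    "\<And>p. normK a p = poly (map_poly of_rat p) z1 * poly (map_poly of_rat p) z2
                        * poly (map_poly of_rat p) z3"
proof -
  obtain z1 z2 z3 where factors: "cubic a = [:-z1, 1:] * [:-z2, 1:] * [:-z3, 1:]"
    by (rule cubic_eq_linear_factors)
  then have vieta: "z1 + z2 + z3 = of_int a" "z1*z2 + z1*z3 + z2*z3 = - of_int (a + 3)"
    "z1*z2*z3 = 1"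
    unfolding linear_factors_product3 cubic_def pCons_eq_iff
    by (metis minus_equation_iff of_int_add of_int_numeral)+
  have "((z1 - z2)*(z1 - z3)*(z2 - z3))^2 = of_int ((a^2 + 3*a + 9)^2)"
    unfolding discriminant_cubic vieta by (simp add: algebra_simps power2_eq_square power3_eq_cube)
  moreover have "a^2 + 3*a + 9 \<noteq> 0"
  proof -
    have "4*(a^2 + 3*a + 9) = (2*a + 3)^2 + 27"
      by (simp add: algebra_simps power2_eq_square)
    then show ?thesis by (smt (verit) zero_le_power2)
  qed
  ultimately have "z1 \<noteq> z2" "z1 \<noteq> z3" "z2 \<noteq> z3"
    by (auto simp del: of_int_power)
  moreover have "poly (cubic a) z = (z - z1) * (z - z2) * (z - z3)" for z
    unfolding factors by (simp add: algebra_simps)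
  then have "{z. poly (cubic a) z = 0} = {z1, z2, z3}"
    by auto
  ultimately show thesis
    using vieta by (intro that) (simp_all add: normK_def mult.assoc)
qed

lemma normK_rho_sq_minus_rho:
  "normK a [:0, - of_int r, 1:] = of_int (1 + (a + 3)*r + a*r^2 - r^3)"
proof -
  obtain z1 z2 z3 :: complex where vieta: "z1 + z2 + z3 = of_int a"
    "z1*z2 + z1*z3 + z2*z3 = - of_int (a + 3)" "z1*z2*z3 = 1"
    and norm: "\<And>p. normK a p = poly (map_poly of_rat p) z1 * poly (map_poly of_rat p) z2
                                * poly (map_poly of_rat p) z3"
    using simplest_cubic_roots[of a] by blast
  have "poly (map_poly of_rat [:0, - of_int r, 1:]) z = z^2 - of_int r * z + 0" for z :: complex
    by (simp add: map_poly_pCons of_rat_minus power2_eq_square algebra_simps)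
  then have "normK a [:0, - of_int r, 1:]
               = (z1^2 - of_int r * z1 + 0) * (z2^2 - of_int r * z2 + 0)
                 * (z3^2 - of_int r * z3 + 0)"
    by (simp only: norm)
  also have "\<dots> = of_int (1 + (a + 3)*r + a*r^2 - r^3)"
    unfolding prod_quadratic_at_roots vieta by (simp add: algebra_simps power2_eq_square power3_eq_cube)
  finally show ?thesis .
qed

lemma normK_g3_minus_g2:
  fixes a r :: int
  defines "t \<equiv> 3*r + 2"
  shows "normK a [:1/3, 1/3 - of_int (r + 1), 1/3:]
           = of_int (- (t^3) - 3*t^2 + (a^2 + 3*a + 6)*t + 2*a^2 + 6*a + 17) / 27"
proof -
  obtain z1 z2 z3 :: complex where vieta: "z1 + z2 + z3 = of_int a"
    "z1*z2 + z1*z3 + z2*z3 = - of_int (a + 3)" "z1*z2*z3 = 1"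
    and norm: "\<And>p. normK a p = poly (map_poly of_rat p) z1 * poly (map_poly of_rat p) z2
                                * poly (map_poly of_rat p) z3"
    using simplest_cubic_roots[of a] by blast
  have eval: "poly (map_poly of_rat [:1/3, 1/3 - of_int (r + 1), 1/3:]) z
               = (z^2 - of_int t * z + 1) / 3" for z :: complex
    by (simp add: t_def map_poly_pCons of_rat_diff of_rat_divide of_rat_add of_rat_mult
                  power2_eq_square field_simps)
  have "normK a [:1/3, 1/3 - of_int (r + 1), 1/3:]
          = (z1^2 - of_int t * z1 + 1) / 3 * ((z2^2 - of_int t * z2 + 1) / 3)
              * ((z3^2 - of_int t * z3 + 1) / 3)"
    by (simp only: norm eval)
  also have "\<dots> = (z1^2 - of_int t * z1 + 1) * (z2^2 - of_int t * z2 + 1)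
                     * (z3^2 - of_int t * z3 + 1) / 27"
    by simp
  also have "\<dots> = of_int (- (t^3) - 3*t^2 + (a^2 + 3*a + 6)*t + 2*a^2 + 6*a + 17) / 27"
    unfolding prod_quadratic_at_roots vieta by (simp add: algebra_simps power2_eq_square power3_eq_cube)
  finally show ?thesis .
qed

lemma norm_rho_sq_minus_rho_bound:
  fixes a r :: int
  assumes "1 \<le> r" and "3*r \<le> a"
  shows "27 * (1 + (a + 3)*r + a*r^2 - r^3) \<le> (2*a + 3) * (a^2 + 3*a + 9)"
proof -
  have factorisation: "(2*a + 3) * (a^2 + 3*a + 9) - 27 * (1 + (a + 3)*r + a*r^2 - r^3)
                         = (a - 3*r) * (2*a^2 + 6*a*r - 9*r^2 + 9*a + 27)"
    by (simp add: algebra_simps power2_eq_square power3_eq_cube)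
  have "9*r^2 \<le> 3*a*r"
    using assms by (simp add: power2_eq_square mult_right_mono)
  moreover have "0 \<le> a*r" "0 \<le> a^2"
    using assms by simp_all
  ultimately have "0 \<le> 2*a^2 + 6*a*r - 9*r^2 + 9*a + 27"
    using assms by linarith
  moreover have "0 \<le> a - 3*r"
    using assms by simp
  ultimately show ?thesis
    using factorisation mult_nonneg_nonneg by (metis diff_ge_0_iff_ge)
qed

lemma norm_g3_minus_g2_bound:
  fixes a t :: int
  assumes "0 \<le> t" and "t \<le> a - 1"
  shows "- (t^3) - 3*t^2 + (a^2 + 3*a + 6)*t + 2*a^2 + 6*a + 17 < (2*a + 3) * (a^2 + 3*a + 9)"
proof -
  have "0 \<le> a^2 + 3*a + 6"
    using assms by (simp add: add_nonneg_nonneg)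
  then have "(a^2 + 3*a + 6)*t \<le> (a^2 + 3*a + 6)*(a - 1)"
    using assms by (simp add: mult_left_mono)
  moreover have "(2*a + 3) * (a^2 + 3*a + 9) - ((a^2 + 3*a + 6)*(a - 1) + 2*a^2 + 6*a + 17)
                   = a^3 + 5*a^2 + 18*a + 16"
    by (simp add: algebra_simps power2_eq_square power3_eq_cube)
  moreover have "0 \<le> a^3" "0 \<le> a^2" "0 \<le> t^3" "0 \<le> t^2"
    using assms by simp_all
  ultimately show ?thesis
    using assms by linarith
qed

theorem lemma7p2:
  fixes a :: int
  defines "\<Delta> \<equiv> a^2 + 3*a + 9"
  assumes "a mod 27 = 3 \<or> a mod 27 = 21"
    and "a > 12"
    and "squarefree (\<Delta> div 27)"
  shows "(\<forall>r::int. 1 \<le> r \<and> real_of_int r \<le> real_of_int a / 3 \<longrightarrow>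
            normK a [:0, - of_int r, 1:] \<in> \<real> \<and>
            Re (normK a [:0, - of_int r, 1:]) \<le> real_of_int ((2*a + 3) * \<Delta>) / 27)
       \<and> (\<forall>r::int. 0 \<le> r \<and> real_of_int r \<le> real_of_int a / 3 - 1 \<longrightarrow>
            normK a [:1/3, 1/3 - of_int (r + 1), 1/3:] \<in> \<real> \<and>
            Re (normK a [:1/3, 1/3 - of_int (r + 1), 1/3:]) < real_of_int ((2*a + 3) * \<Delta>) / 27)"
proof (intro conjI allI impI; elim conjE)
  \<comment> \<open>The arithmetic hypotheses only make \<open>{1, g\<^sub>2, g\<^sub>3}\<close> an integral basis in the paper;
    the estimates hold without them.\<close>
  fix r :: int
  assume "1 \<le> r" and "real_of_int r \<le> real_of_int a / 3"
  then have "real_of_int (27 * (1 + (a + 3)*r + a*r^2 - r^3)) \<le> real_of_int ((2*a + 3) * \<Delta>)"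
    unfolding of_int_le_iff \<Delta>_def by (intro norm_rho_sq_minus_rho_bound) linarith+
  then show "Re (normK a [:0, - of_int r, 1:]) \<le> real_of_int ((2*a + 3) * \<Delta>) / 27"
    unfolding normK_rho_sq_minus_rho by simp
  show "normK a [:0, - of_int r, 1:] \<in> \<real>"
    unfolding normK_rho_sq_minus_rho by simp
next
  fix r :: int
  assume "0 \<le> r" and "real_of_int r \<le> real_of_int a / 3 - 1"
  then have "real_of_int (- ((3*r + 2)^3) - 3*(3*r + 2)^2 + (a^2 + 3*a + 6)*(3*r + 2)
                           + 2*a^2 + 6*a + 17)
               < real_of_int ((2*a + 3) * \<Delta>)"
    unfolding of_int_less_iff \<Delta>_def by (intro norm_g3_minus_g2_bound) linarith+
  then show "Re (normK a [:1/3, 1/3 - of_int (r + 1), 1/3:]) < real_of_int ((2*a + 3) * \<Delta>) / 27"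
    unfolding normK_g3_minus_g2 by simp
  show "normK a [:1/3, 1/3 - of_int (r + 1), 1/3:] \<in> \<real>"
    unfolding normK_g3_minus_g2 by simp
qed

end
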